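(* The set of finite factors of $\mathbf{t}_{3/2}$ is closed under bit-wise complement (if $u$ is a factor then so is $\bar u$), and so is the set of finite factors of $\mathbf{t}'$. Consequently, $\mathsf{p}_{\mathbf{t}_{3/2}}(n+1)=2\,\mathsf{p}_{\Delta(\mathbf{t}_{3/2})}(n)$ for all $n\ge 0$.
   Context: Base-$3/2$ expansions: $\langle 0\rangle_{3/2}$ is the empty word, and for $n\ge 1$, writing $2n=3m+d$ with integers $m\ge0$, $d\in\{0,1,2\}$, set $\langle n\rangle_{3/2}=\langle m\rangle_{3/2}\,d$. The Thue--Morse word in base $3/2$ is $\mathbf{t}_{3/2}=(t_n)_{n\ge0}\in\{0,1\}^{\mathbb{N}}$ where $t_n$ is the digit sum of $\langle n\rangle_{3/2}$ modulo $2$; equivalently the unique binary sequence with $t_0=0$, $t_{3n}=t_{3n+1}=t_{2n}$, $t_{3n+2}=1-t_{2n+1}$. Dekking's word $\mathbf{t}'=(x_n)_{n\ge0}$ is the unique binary infinite word with $x_0=0$ such that $\mathbf{t}'=\beta(x_0x_1)\beta(x_2x_3)\cdots$ where $\beta(00)=\beta(01)=010$, $\beta(10)=\beta(11)=101$. The bit-wise complement $\bar u$ of a binary word $u$ is obtained by exchanging $0$ and $1$. For an infinite binary word $\mathbf{x}=(x_n)$, $\Delta(\mathbf{x})=(x_{n+1}-x_n \bmod 2)_{n\ge0}$ is its first difference sequence, and $\mathsf{p}_{\mathbf{x}}(n)$ denotes the number of distinct factors of length $n$ of $\mathbf{x}$. *)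

theory Defs
  imports Main
begin

(* Binary words are represented as nat-valued sequences with values in {0,1}. *)

fun exp32 :: "nat \<Rightarrow> nat list" where
  "exp32 n = (if n = 0 then [] else exp32 ((2 * n) div 3) @ [(2 * n) mod 3])"

definition t32 :: "nat \<Rightarrow> nat" where
  "t32 n = sum_list (exp32 n) mod 2"

definition beta :: "nat \<Rightarrow> nat \<Rightarrow> nat list" where
  "beta a b = (if a = 0 then [0,1,0] else [1,0,1])"

(* t' = beta(x0 x1) beta(x2 x3) ... : block k (positions 3k,3k+1,3k+2) is beta(x_{2k} x_{2k+1}) *)
definition dekking :: "nat \<Rightarrow> nat" where
  "dekking = (THE x. (\<forall>n. x n \<in> {0,1}) \<and> x 0 = 0 \<and>
      (\<forall>k. [x (3*k), x (3*k+1), x (3*k+2)] = beta (x (2*k)) (x (2*k+1))))"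

definition compl_word :: "nat list \<Rightarrow> nat list" where
  "compl_word u = map (\<lambda>a. 1 - a) u"

definition factors :: "(nat \<Rightarrow> nat) \<Rightarrow> nat list set" where
  "factors x = {map x [i..<i+n] | i n. True}"

definition factors_len :: "(nat \<Rightarrow> nat) \<Rightarrow> nat \<Rightarrow> nat list set" where
  "factors_len x n = {map x [i..<i+n] | i. True}"

definition complexity :: "(nat \<Rightarrow> nat) \<Rightarrow> nat \<Rightarrow> nat" where
  "complexity x n = card (factors_len x n)"

definition Delta :: "(nat \<Rightarrow> nat) \<Rightarrow> nat \<Rightarrow> nat" where
  "Delta x n = nat ((int (x (Suc n)) - int (x n)) mod 2)"

definition closed_under_compl :: "nat list set \<Rightarrow> bool" where
  "closed_under_compl S \<longleftrightarrow> (\<forall>u\<in>S. compl_word u \<in> S)"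

end

theory Submission
  imports Defs "HOL-Number_Theory.Cong"
begin

(* The recursion 2n = 3m + d shows that the base-3/2 expansion of n + 3^J y, for n \<le> J,
   is the expansion of 2^J y followed by the (zero-padded) expansion of n, so
   t(n + 3^J y) = t(n) + t(2^J y) mod 2.  Since 3 is invertible modulo 2^J, some y has
   t(2^J y) = 1, and then the shift by 3^J y complements the prefix of length J of t_{3/2},
   hence every factor.  Dekking's word is the image of t_{3/2} under 0 \<mapsto> 010, 1 \<mapsto> 101, so
   shifting by three times that amount complements its prefixes too.  Finally, a binary factor
   is determined by its first letter and its difference word, and for a complement-closed word
   both first letters occur with every difference word: p(n+1) = 2 p_Delta(n). *)

section \<open>Factors closed under complement\<close>

lemma factors_len_eq: "factors_len x n = {u \<in> factors x. length u = n}"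
  unfolding factors_len_def factors_def by auto

lemma length_factors_len: "u \<in> factors_len x n \<Longrightarrow> length u = n"
  unfolding factors_len_def by auto

lemma factors_len_binary:
  assumes "range x \<subseteq> {0, 1}" and "u \<in> factors_len x n"
  shows "set u \<subseteq> {0, 1}"
proof -
  have "set u \<subseteq> range x"
    using assms(2) unfolding factors_len_def by auto
  also have "\<dots> \<subseteq> {0, 1}"
    by (fact assms(1))
  finally show ?thesis .
qed

lemma compl_word_factors_len:
  "closed_under_compl (factors x) \<Longrightarrow> u \<in> factors_len x n \<Longrightarrow> compl_word u \<in> factors_len x n"
  by (simp add: factors_len_eq closed_under_compl_def compl_word_def)

lemma closed_under_compl_factorsI:
  assumes "\<And>N. \<exists>D. \<forall>i<N. x (i + D) = 1 - x i"
  shows "closed_under_compl (factors x)"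
  unfolding closed_under_compl_def
proof
  fix u assume "u \<in> factors x"
  then obtain i n where u: "u = map x [i..<i + n]"
    unfolding factors_def by blast
  obtain D where D: "\<forall>k<i + n. x (k + D) = 1 - x k"
    using assms by blast
  have "compl_word u = map x [i + D..<i + D + n]"
  proof (rule nth_equalityI)
    fix k assume "k < length (compl_word u)"
    then have "k < n" by (simp add: u compl_word_def)
    then show "compl_word u ! k = map x [i + D..<i + D + n] ! k"
      using D[rule_format, of "i + k"] by (simp add: u compl_word_def add_ac)
  qed (simp add: u compl_word_def)
  then show "compl_word u \<in> factors x"
    unfolding factors_def by blast
qed

section \<open>Complexity of a complement-closed binary word\<close>

fun Delta_word :: "nat list \<Rightarrow> nat list" where
  "Delta_word (a # b # w) = nat ((int b - int a) mod 2) # Delta_word (b # w)"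
| "Delta_word _ = []"

lemma Delta_word_factor: "Delta_word (map x [i..<Suc (i + n)]) = map (Delta x) [i..<i + n]"
proof (induction n arbitrary: i)
  case 0
  then show ?case by simp
next
  case (Suc n)
  have "map x [i..<Suc (i + Suc n)] = x i # map x [Suc i..<Suc (Suc i + n)]"
    by (simp add: upt_conv_Cons del: upt_Suc)
  moreover have "map x [Suc i..<Suc (Suc i + n)] = x (Suc i) # map x [Suc (Suc i)..<Suc (Suc i + n)]"
    by (simp add: upt_conv_Cons del: upt_Suc)
  ultimately show ?case
    using Suc.IH[of "Suc i"] by (simp add: Delta_def upt_conv_Cons del: upt_Suc)
qed

lemma Delta_word_compl_word:
  "set u \<subseteq> {0, 1} \<Longrightarrow> Delta_word (compl_word u) = Delta_word u"
  by (induction u rule: Delta_word.induct) (auto simp: compl_word_def)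

lemma binary_word_eqI:
  assumes "set u \<subseteq> {0, 1}" "set v \<subseteq> {0, 1}" "length u = length v"
    and "hd u = hd v" "Delta_word u = Delta_word v"
  shows "u = v"
  using assms
proof (induction u arbitrary: v rule: Delta_word.induct)
  case (1 a b w)
  then obtain c w' where v: "v = a # c # w'"
    by (cases v rule: Delta_word.cases) auto
  have "b = c"
    using "1.prems" unfolding v by auto
  then show ?case
    using "1.IH"[of "c # w'"] "1.prems" unfolding v by simp
next
  case ("2_1" v')
  then show ?case by simp
next
  case ("2_2" a v')
  then show ?case by (cases v') auto
qed

lemma hd_Delta_word_image_factors_len:
  assumes binary: "range x \<subseteq> {0, 1}" and closed: "closed_under_compl (factors x)"
  shows "(\<lambda>u. (hd u, Delta_word u)) ` factors_len x (Suc n) = {0, 1} \<times> factors_len (Delta x) n"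
proof (intro equalityI subsetI)
  fix p assume "p \<in> (\<lambda>u. (hd u, Delta_word u)) ` factors_len x (Suc n)"
  then obtain i where "p = (hd (map x [i..<Suc (i + n)]), Delta_word (map x [i..<Suc (i + n)]))"
    unfolding factors_len_def by auto
  then have "p = (x i, map (Delta x) [i..<i + n])"
    by (simp add: Delta_word_factor hd_map del: upt_Suc)
  then show "p \<in> {0, 1} \<times> factors_len (Delta x) n"
    using binary unfolding factors_len_def by auto
next
  fix p :: "nat \<times> nat list" assume "p \<in> {0, 1} \<times> factors_len (Delta x) n"
  then obtain c i where p: "p = (c, map (Delta x) [i..<i + n])" "c \<in> {0, 1}"
    unfolding factors_len_def by auto
  define u where "u = map x [i..<i + Suc n]"
  have u: "u \<in> factors_len x (Suc n)" "hd u = x i" "Delta_word u = map (Delta x) [i..<i + n]"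
    unfolding u_def factors_len_def by (blast, simp_all add: Delta_word_factor hd_map del: upt_Suc)
  have "hd (compl_word u) = 1 - x i"
    using u(2) length_factors_len[OF u(1)] by (cases u) (simp_all add: compl_word_def)
  moreover have "Delta_word (compl_word u) = Delta_word u"
    using factors_len_binary[OF binary u(1)] by (rule Delta_word_compl_word)
  moreover have "x i \<in> {0, 1}"
    using binary by blast
  ultimately have "p = (hd u, Delta_word u) \<or> p = (hd (compl_word u), Delta_word (compl_word u))"
    using u(2,3) p by auto
  then show "p \<in> (\<lambda>u. (hd u, Delta_word u)) ` factors_len x (Suc n)"
    using u(1) compl_word_factors_len[OF closed u(1)] by blast
qed

lemma complexity_Suc_eq_double_complexity_Delta:
  assumes "range x \<subseteq> {0, 1}" and "closed_under_compl (factors x)"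
  shows "complexity x (Suc n) = 2 * complexity (Delta x) n"
proof -
  have "inj_on (\<lambda>u. (hd u, Delta_word u)) (factors_len x (Suc n))"
    using binary_word_eqI factors_len_binary[OF assms(1)] length_factors_len
    by (intro inj_onI) (metis prod.inject)
  then have "bij_betw (\<lambda>u. (hd u, Delta_word u)) (factors_len x (Suc n))
      ({0, 1} \<times> factors_len (Delta x) n)"
    using hd_Delta_word_image_factors_len[OF assms] by (rule bij_betw_imageI)
  then have "complexity x (Suc n) = card ({0::nat, 1} \<times> factors_len (Delta x) n)"
    unfolding complexity_def by (rule bij_betw_same_card)
  then show ?thesis
    unfolding complexity_def by (simp add: card_cartesian_product)
qed

section \<open>The Thue--Morse word in base 3/2\<close>

declare exp32.simps [simp del]

lemma t32_0 [simp]: "t32 0 = 0"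
  by (simp add: t32_def exp32.simps)

lemma t32_less_2: "t32 n < 2"
  by (simp add: t32_def)

lemma range_t32: "range t32 \<subseteq> {0, 1}"
proof (rule image_subsetI)
  fix n
  show "t32 n \<in> {0, 1}"
    using less_2_cases[OF t32_less_2[of n]] by simp
qed

lemma t32_rec: "t32 n = (t32 (2 * n div 3) + 2 * n mod 3) mod 2"
proof (cases "n = 0")
  case False
  then have "exp32 n = exp32 (2 * n div 3) @ [2 * n mod 3]"
    by (subst exp32.simps) simp
  then show ?thesis
    by (simp add: t32_def mod_add_left_eq)
qed simp

lemma t32_2: "t32 2 = 1"
proof -
  have "t32 1 = 0"
    using t32_rec[of 1] by simp
  then show ?thesis
    using t32_rec[of 2] by simp
qed

lemma t32_add_3_power_mult:
  "n \<le> J \<Longrightarrow> t32 (n + 3 ^ J * y) = (t32 n + t32 (2 ^ J * y)) mod 2"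
proof (induction J arbitrary: n y)
  case 0
  then show ?case
    using t32_less_2[of y] by simp
next
  case (Suc J)
  have "2 * n div 3 \<le> J"
    using Suc.prems by linarith
  have "2 * (n + 3 ^ Suc J * y) = 2 * n + 3 ^ J * (2 * y) * 3"
    by simp
  then have "t32 (n + 3 ^ Suc J * y) = (t32 (2 * n div 3 + 3 ^ J * (2 * y)) + 2 * n mod 3) mod 2"
    using t32_rec[of "n + 3 ^ Suc J * y"] by (simp only: div_mult_self1 mod_mult_self1 add.commute)
  also have "\<dots> = ((t32 (2 * n div 3) + t32 (2 ^ J * (2 * y))) mod 2 + 2 * n mod 3) mod 2"
    using Suc.IH[OF \<open>2 * n div 3 \<le> J\<close>] by simp
  also have "\<dots> = ((t32 (2 * n div 3) + 2 * n mod 3) mod 2 + t32 (2 ^ Suc J * y)) mod 2"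
    by (simp add: mult_ac) presburger
  also have "\<dots> = (t32 n + t32 (2 ^ Suc J * y)) mod 2"
    using t32_rec[of n] by simp
  finally show ?case .
qed

lemma coprime_exists_mult_add_dvd:
  fixes a m c :: nat
  assumes "coprime a m" and "m > 0"
  shows "\<exists>y. m dvd a * y + c"
proof -
  obtain y where "[a * y = (m - 1) * c] (mod m)"
    using cong_solve_dvd_nat assms(1) by (metis coprime_iff_gcd_eq_1 one_dvd)
  then have "[a * y + c = (m - 1) * c + c] (mod m)"
    by (rule cong_add) (rule cong_refl)
  also have "(m - 1) * c + c = m * c"
    using assms(2) by (cases m) simp_all
  finally have "m dvd a * y + c"
    using cong_dvd_iff by (metis dvd_triv_left)
  then show ?thesis ..
qed

lemma t32_exists_power_2_mult: "\<exists>y. t32 (2 ^ K * y) = 1"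
proof -
  obtain z :: nat where z: "2 ^ K dvd 3 ^ (K + 2) * z + 2"
    using coprime_exists_mult_add_dvd[of "3 ^ (K + 2)" "2 ^ K" 2] by auto
  \<comment> \<open>either 2^(K+2) z or 3^(K+2) z + 2 is a multiple of 2^K on which t32 is 1\<close>
  have split: "t32 (3 ^ (K + 2) * z + 2) = (1 + t32 (2 ^ (K + 2) * z)) mod 2"
    using t32_add_3_power_mult[of 2 "K + 2" z] by (simp add: t32_2 add.commute)
  show ?thesis
  proof (cases "t32 (2 ^ (K + 2) * z) = 1")
    case True
    then have "t32 (2 ^ K * (4 * z)) = 1"
      by (simp add: power_add mult_ac)
    then show ?thesis ..
  next
    case False
    then have "t32 (3 ^ (K + 2) * z + 2) = 1"
      using split t32_less_2[of "2 ^ (K + 2) * z"] by simp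
    with z show ?thesis
      by (auto elim!: dvdE)
  qed
qed

lemma t32_complementing_shift: "\<exists>D. \<forall>i<N. t32 (i + D) = 1 - t32 i"
proof -
  obtain y where y: "t32 (2 ^ N * y) = 1"
    using t32_exists_power_2_mult by blast
  have "t32 (i + 3 ^ N * y) = 1 - t32 i" if "i < N" for i
    using t32_add_3_power_mult[of i N y] that y t32_less_2[of i] by (auto simp: less_2_cases_iff)
  then show ?thesis
    by blast
qed

lemma closed_under_compl_factors_t32: "closed_under_compl (factors t32)"
  using t32_complementing_shift by (rule closed_under_compl_factorsI)

section \<open>Dekking's word\<close>

definition is_dekking_word :: "(nat \<Rightarrow> nat) \<Rightarrow> bool" where
  "is_dekking_word x \<longleftrightarrow> (\<forall>n. x n \<in> {0, 1}) \<and> x 0 = 0 \<and>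
      (\<forall>k. [x (3 * k), x (3 * k + 1), x (3 * k + 2)] = beta (x (2 * k)) (x (2 * k + 1)))"

lemma is_dekking_word_rec:
  assumes "is_dekking_word x"
  shows "x n = (x (2 * (n div 3)) + n mod 3) mod 2"
proof -
  define k where "k = n div 3"
  have binary: "x (2 * k) \<in> {0, 1}"
    and block: "[x (3 * k), x (3 * k + 1), x (3 * k + 2)] = beta (x (2 * k)) (x (2 * k + 1))"
    using assms unfolding is_dekking_word_def by blast+
  have "x (3 * k + r) = (x (2 * k) + r) mod 2" if "r < 3" for r
    using that binary block by (auto simp: beta_def less_Suc_eq numeral_3_eq_3)
  from this[of "n mod 3"] show ?thesis
    by (simp add: k_def)
qed

lemma is_dekking_word_unique:
  assumes "is_dekking_word x" and "is_dekking_word y"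
  shows "x = y"
proof
  fix n
  show "x n = y n"
  proof (induction n rule: less_induct)
    case (less n)
    show ?case
    proof (cases "n = 0")
      case True
      then show ?thesis
        using assms unfolding is_dekking_word_def by simp
    next
      case False
      then have "x (2 * (n div 3)) = y (2 * (n div 3))"
        by (intro less.IH) linarith
      then show ?thesis
        using is_dekking_word_rec[OF assms(1)] is_dekking_word_rec[OF assms(2)] by metis
    qed
  qed
qed

(* The image of t_{3/2} under the morphism 0 \<mapsto> 010, 1 \<mapsto> 101. *)
definition mu_t32 :: "nat \<Rightarrow> nat" where
  "mu_t32 n = (t32 (n div 3) + n mod 3) mod 2"

lemma mu_t32_block: "r < 3 \<Longrightarrow> mu_t32 (3 * k + r) = (t32 k + r) mod 2"
  by (simp add: mu_t32_def)

lemma mu_t32_double: "mu_t32 (2 * k) = t32 k"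
  using t32_rec[of k] by (simp add: mu_t32_def)

lemma is_dekking_word_mu_t32: "is_dekking_word mu_t32"
  unfolding is_dekking_word_def
proof (intro conjI allI)
  show "mu_t32 n \<in> {0, 1}" for n
    by (auto simp: mu_t32_def)
  show "mu_t32 0 = 0"
    by (simp add: mu_t32_def)
  show "[mu_t32 (3 * k), mu_t32 (3 * k + 1), mu_t32 (3 * k + 2)] = beta (mu_t32 (2 * k)) (mu_t32 (2 * k + 1))"
    for k
    using mu_t32_block[of 0 k] mu_t32_block[of 1 k] mu_t32_block[of 2 k] t32_less_2[of k]
    by (auto simp: mu_t32_double beta_def less_2_cases_iff)
qed

lemma dekking_eq_mu_t32: "dekking = mu_t32"
proof -
  have "dekking = (THE x. is_dekking_word x)"
    unfolding dekking_def is_dekking_word_def ..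
  also have "\<dots> = mu_t32"
    using is_dekking_word_mu_t32 is_dekking_word_unique by blast
  finally show ?thesis .
qed

lemma closed_under_compl_factors_dekking: "closed_under_compl (factors dekking)"
  unfolding dekking_eq_mu_t32
proof (rule closed_under_compl_factorsI)
  fix N
  obtain D where D: "\<forall>i<N. t32 (i + D) = 1 - t32 i"
    using t32_complementing_shift by blast
  have "mu_t32 (i + 3 * D) = 1 - mu_t32 i" if "i < N" for i
  proof -
    have "mu_t32 (i + 3 * D) = (t32 (i div 3 + D) + i mod 3) mod 2"
      by (simp add: mu_t32_def add.commute)
    also have "\<dots> = (1 - t32 (i div 3) + i mod 3) mod 2"
      using D that by simp
    also have "\<dots> = 1 - mu_t32 i"
      using t32_less_2[of "i div 3"] by (auto simp: mu_t32_def less_2_cases_iff mod_Suc)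
    finally show ?thesis .
  qed
  then show "\<exists>D. \<forall>i<N. mu_t32 (i + D) = 1 - mu_t32 i"
    by blast
qed

theorem proposition15:
  shows "closed_under_compl (factors t32) \<and> closed_under_compl (factors dekking) \<and>
         (\<forall>n. complexity t32 (n + 1) = 2 * complexity (Delta t32) n)"
  using closed_under_compl_factors_t32 closed_under_compl_factors_dekking
    complexity_Suc_eq_double_complexity_Delta[OF range_t32 closed_under_compl_factors_t32]
  by simp

end
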